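(* Let $\psi$ be an injective map from the positive integers to the positive integers and let $A=\{\psi(n): n\ge 1\}$. Let $\alpha$ be a positive integer. Define $\Gamma^{\psi}_{\alpha}(0)=1$ and, for a positive integer $m$, \[ \Gamma^{\psi}_{\alpha}(m)=\sum_{(N_0,N_1,N_2,\dots)}\ \prod_{j\ge0}\bar{p}^{A}(N_j), \] the sum running over all sequences of nonnegative integers $(N_0,N_1,\dots)$ with $m=(\alpha+1)\sum_{i\ge0}2^{i}N_i$ (so $\Gamma^{\psi}_{\alpha}(m)=0$ if there is no such sequence). Then for every nonnegative integer $n$, \[ p^{A}_{\alpha}(n)=\sum_{i=0}^{n}p^{A}(n-i)\,\Gamma^{\psi}_{\alpha}(i). \]
   Context: For a set $A$ of positive integers and a positive integer $\alpha$, $p^{A}_{\alpha}(n)$ is the number of partitions of $n$ into parts from $A$ in which each part occurs at most $\alpha$ times, and $p^{A}(n)$ is the number of partitions of $n$ into parts from $A$ without restriction; $p^{A}_{\alpha}(0)=p^{A}(0)=1$. Further $\bar{p}^{A}(n)=E^{A}(n)-O^{A}(n)$, where $E^{A}(n)$ (resp. $O^{A}(n)$) is the number of partitions of $n$ into parts from $A$ (no restriction on multiplicities) with an even (resp. odd) number of parts, and $\bar{p}^{A}(0)=1$. *)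

theory Defs
  imports Main "HOL-Library.Multiset"
begin

definition partsA :: "nat set \<Rightarrow> nat \<Rightarrow> nat multiset set" where
  "partsA A n = {M. set_mset M \<subseteq> A \<and> sum_mset M = n}"

definition pA :: "nat set \<Rightarrow> nat \<Rightarrow> nat" where
  "pA A n = card (partsA A n)"

definition pA_alpha :: "nat set \<Rightarrow> nat \<Rightarrow> nat \<Rightarrow> nat" where
  "pA_alpha A \<alpha> n = card {M \<in> partsA A n. \<forall>x. count M x \<le> \<alpha>}"

definition EA :: "nat set \<Rightarrow> nat \<Rightarrow> nat" where
  "EA A n = card {M \<in> partsA A n. even (size M)}"

definition OA :: "nat set \<Rightarrow> nat \<Rightarrow> nat" where
  "OA A n = card {M \<in> partsA A n. odd (size M)}"

definition pbarA :: "nat set \<Rightarrow> nat \<Rightarrow> int" where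
  "pbarA A n = int (EA A n) - int (OA A n)"

text \<open>Gamma: sum over (finitely supported) sequences N of nonnegative integers with
  m = (alpha+1) * sum_i 2^i N_i of prod_j pbar(N_j); since pbar(0) = 1 the infinite
  product equals the product over the support.\<close>

definition Gamma :: "nat set \<Rightarrow> nat \<Rightarrow> nat \<Rightarrow> int" where
  "Gamma A \<alpha> m = (if m = 0 then 1 else
     (\<Sum>N \<in> {N :: nat \<Rightarrow> nat. finite {i. N i \<noteq> 0} \<and>
                 m = (\<alpha> + 1) * (\<Sum>i \<in> {i. N i \<noteq> 0}. 2 ^ i * N i)}.
        \<Prod>j \<in> {j. N j \<noteq> 0}. pbarA A (N j)))"

end

theory Submission
  imports Defs "HOL-Computational_Algebra.Formal_Power_Series"
begin

text \<open>Only parts \<open>a \<le> n\<close> matter for the coefficient of \<open>q\<^sup>n\<close>, so with \<open>B = A \<inter> {..n}\<close> all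
  generating functions are finite products over \<open>a \<in> B\<close> of dilated series \<open>f(q\<^sup>a)\<close>:
  \<open>p\<^sup>A\<close> comes from \<open>1/(1 - q\<^sup>a)\<close>, \<open>p\<^sup>A\<^sub>\<alpha>\<close> from \<open>(1 - q\<^bsup>(\<alpha>+1)a\<^esup>)/(1 - q\<^sup>a)\<close> and the signed count
  \<open>E\<^sup>A - O\<^sup>A\<close> from \<open>1/(1 + q\<^sup>a)\<close>. Iterating \<open>1 - x = (1 - x\<^sup>2)/(1 + x)\<close> gives
  \<open>1 - x = (1 - x\<^bsup>2^(n+1)\<^esup>) \<Prod>\<^bsub>i\<le>n\<^esub> 1/(1 + x\<^bsup>2^i\<^esup>)\<close>; taking \<open>x = q\<^bsup>(\<alpha>+1)a\<^esup>\<close> and multiplying over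
  \<open>a \<in> B\<close> turns the numerators into \<open>\<Prod>\<^bsub>i\<le>n\<^esub> R(q\<^bsup>(\<alpha>+1)2^i\<^esup>)\<close>, \<open>R\<close> the generating function of
  \<open>E\<^sup>A - O\<^sup>A\<close>, up to factors \<open>\<equiv> 1 mod q\<^bsup>n+1\<^esup>\<close>. The coefficient of \<open>q\<^sup>m\<close> in that product is \<open>\<Gamma>(m)\<close>,
  so comparing coefficients of \<open>q\<^sup>n\<close> gives the identity.\<close>

definition fps_dilate :: "nat \<Rightarrow> 'a::idom fps \<Rightarrow> 'a fps" where
  "fps_dilate d f = f oo fps_X ^ d"

lemma fps_nth_dilate:
  assumes "d > 0"
  shows "fps_nth (fps_dilate d f) n = (if d dvd n then fps_nth f (n div d) else 0)"
proof -
  have "fps_nth (fps_dilate d f) n = (\<Sum>i=0..n. fps_nth f i * of_bool (d dvd n \<and> i = n div d))"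
    unfolding fps_dilate_def fps_compose_nth
    by (intro sum.cong refl) (use assms in \<open>auto simp: power_mult[symmetric]\<close>)
  also have "\<dots> = (if d dvd n then fps_nth f (n div d) else 0)"
    using assms by (auto simp: div_le_dividend)
  finally show ?thesis .
qed

lemma fps_dilate_mult: "d > 0 \<Longrightarrow> fps_dilate d (f * g) = fps_dilate d f * fps_dilate d g"
  unfolding fps_dilate_def by (rule fps_compose_mult_distrib) simp

lemma fps_dilate_prod: "d > 0 \<Longrightarrow> fps_dilate d (\<Prod>x\<in>S. f x) = (\<Prod>x\<in>S. fps_dilate d (f x))"
  unfolding fps_dilate_def by (rule fps_compose_prod_distrib) simp

lemma fps_dilate_1 [simp]: "fps_dilate d 1 = 1"
  unfolding fps_dilate_def by simp

lemma fps_dilate_add: "fps_dilate d (f + g) = fps_dilate d f + fps_dilate d g"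
  unfolding fps_dilate_def by (rule fps_compose_add_distrib)

lemma fps_dilate_diff: "fps_dilate d (f - g) = fps_dilate d f - fps_dilate d g"
  unfolding fps_dilate_def by (rule fps_compose_sub_distrib)

lemma fps_dilate_X_power: "d > 0 \<Longrightarrow> fps_dilate d (fps_X ^ k) = fps_X ^ (d * k)"
  unfolding fps_dilate_def by (subst fps_X_power_compose) (auto simp: power_mult)

lemma fps_dilate_dilate: "d > 0 \<Longrightarrow> e > 0 \<Longrightarrow> fps_dilate d (fps_dilate e f) = fps_dilate (e * d) f"
  by (auto simp: fps_eq_iff fps_nth_dilate dvd_mult_imp_div div_mult2_eq)

lemma fps_nth_mult_dilate:
  assumes "d > 0"
  shows "fps_nth (fps_dilate d f * g) k = (\<Sum>j | d * j \<le> k. fps_nth f j * fps_nth g (k - d * j))"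
proof -
  have "fps_nth (fps_dilate d f * g) k = (\<Sum>t\<in>(\<lambda>j. d * j) ` {j. d * j \<le> k}. fps_nth f (t div d) * fps_nth g (k - t))"
    unfolding fps_mult_nth
    by (rule sum.mono_neutral_cong_right) (use assms in \<open>auto simp: fps_nth_dilate\<close>)
  also have "\<dots> = (\<Sum>j | d * j \<le> k. fps_nth f j * fps_nth g (k - d * j))"
    using assms by (subst sum.reindex) (auto simp: inj_on_def)
  finally show ?thesis .
qed

definition weighted_msets :: "'i set \<Rightarrow> ('i \<Rightarrow> nat) \<Rightarrow> nat \<Rightarrow> 'i multiset set" where
  "weighted_msets I d k = {M. set_mset M \<subseteq> I \<and> (\<Sum>i\<in>I. d i * count M i) = k}"

lemma weighted_msets_empty: "weighted_msets {} d k = (if k = 0 then {{#}} else {})"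
  by (auto simp: weighted_msets_def)

lemma bij_betw_weighted_msets_insert:
  assumes "finite I" "b \<notin> I"
  shows "bij_betw (\<lambda>(j, M). M + replicate_mset j b)
           (SIGMA j:{j. d b * j \<le> k}. weighted_msets I d (k - d b * j)) (weighted_msets (insert b I) d k)"
proof (rule bij_betwI[where g = "\<lambda>M. (count M b, filter_mset (\<lambda>x. x \<noteq> b) M)"])
  show "(\<lambda>(j, M). M + replicate_mset j b) \<in> (SIGMA j:{j. d b * j \<le> k}. weighted_msets I d (k - d b * j))
          \<rightarrow> weighted_msets (insert b I) d k"
  proof clarify
    fix j M assume j: "d b * j \<le> k" and M: "M \<in> weighted_msets I d (k - d b * j)"
    then have "count M b = 0"
      using assms by (auto simp: weighted_msets_def simp flip: not_in_iff)
    moreover have "(\<Sum>i\<in>I. d i * count (M + replicate_mset j b) i) = (\<Sum>i\<in>I. d i * count M i)"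
      by (rule sum.cong) (use assms in auto)
    ultimately show "M + replicate_mset j b \<in> weighted_msets (insert b I) d k"
      using assms j M by (auto simp: weighted_msets_def)
  qed
  show "(\<lambda>M. (count M b, filter_mset (\<lambda>x. x \<noteq> b) M)) \<in> weighted_msets (insert b I) d k
          \<rightarrow> (SIGMA j:{j. d b * j \<le> k}. weighted_msets I d (k - d b * j))"
    using assms by (auto simp: weighted_msets_def intro!: sum.cong)
  show "(\<lambda>M. (count M b, filter_mset (\<lambda>x. x \<noteq> b) M)) ((\<lambda>(j, M). M + replicate_mset j b) x) = x"
    if "x \<in> (SIGMA j:{j. d b * j \<le> k}. weighted_msets I d (k - d b * j))" for x
    using that assms by (auto simp: weighted_msets_def multiset_eq_iff simp flip: not_in_iff)
  show "(\<lambda>(j, M). M + replicate_mset j b) ((\<lambda>M. (count M b, filter_mset (\<lambda>x. x \<noteq> b) M)) M) = M"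
    for M by (auto simp: multiset_eq_iff)
qed

lemma finite_multiples_le:
  fixes d k :: nat
  assumes "d > 0" shows "finite {j. d * j \<le> k}"
proof (rule finite_subset)
  show "{j. d * j \<le> k} \<subseteq> {..k}"
    using assms by (auto simp: gr0_conv_Suc)
qed simp

lemma finite_weighted_msets:
  assumes "finite I" "\<forall>i\<in>I. d i > 0"
  shows "finite (weighted_msets I d k)"
  using assms
proof (induction I arbitrary: k rule: finite_induct)
  case empty
  then show ?case by (simp add: weighted_msets_empty)
next
  case (insert b I)
  have "finite (SIGMA j:{j. d b * j \<le> k}. weighted_msets I d (k - d b * j))"
    using insert by (auto intro: finite_multiples_le)
  then show ?case
    using bij_betw_finite[OF bij_betw_weighted_msets_insert[OF insert.hyps]] by blast
qed

lemma fps_nth_prod_dilate: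
  fixes F :: "'i \<Rightarrow> 'a::idom fps"
  assumes "finite I" "\<forall>i\<in>I. d i > 0"
  shows "fps_nth (\<Prod>i\<in>I. fps_dilate (d i) (F i)) k =
           (\<Sum>M\<in>weighted_msets I d k. \<Prod>i\<in>I. fps_nth (F i) (count M i))"
  using assms
proof (induction I arbitrary: k rule: finite_induct)
  case empty
  then show ?case by (simp add: weighted_msets_empty)
next
  case (insert b I)
  define J where "J = {j. d b * j \<le> k}"
  define \<Sigma> where "\<Sigma> = (SIGMA j:J. weighted_msets I d (k - d b * j))"
  have "fps_nth (\<Prod>i\<in>insert b I. fps_dilate (d i) (F i)) k
      = (\<Sum>j\<in>J. fps_nth (F b) j * fps_nth (\<Prod>i\<in>I. fps_dilate (d i) (F i)) (k - d b * j))"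
    using insert by (simp add: fps_nth_mult_dilate J_def)
  also have "\<dots> = (\<Sum>j\<in>J. \<Sum>M\<in>weighted_msets I d (k - d b * j).
                     fps_nth (F b) j * (\<Prod>i\<in>I. fps_nth (F i) (count M i)))"
    using insert by (simp add: sum_distrib_left)
  also have "\<dots> = (\<Sum>(j, M)\<in>\<Sigma>. fps_nth (F b) j * (\<Prod>i\<in>I. fps_nth (F i) (count M i)))"
    unfolding \<Sigma>_def J_def
    by (rule sum.Sigma) (use insert in \<open>auto intro: finite_multiples_le finite_weighted_msets\<close>)
  also have "\<dots> = (\<Sum>(j, M)\<in>\<Sigma>. \<Prod>i\<in>insert b I. fps_nth (F i) (count (M + replicate_mset j b) i))"
  proof (rule sum.cong[OF refl], clarify)
    fix j M assume "(j, M) \<in> \<Sigma>"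
    then have "b \<notin># M"
      using insert.hyps by (auto simp: \<Sigma>_def weighted_msets_def)
    moreover have "count (M + replicate_mset j b) i = count M i" if "i \<in> I" for i
      using that insert.hyps by auto
    ultimately show "fps_nth (F b) j * (\<Prod>i\<in>I. fps_nth (F i) (count M i))
        = (\<Prod>i\<in>insert b I. fps_nth (F i) (count (M + replicate_mset j b) i))"
      using insert.hyps by (simp add: not_in_iff)
  qed
  also have "\<dots> = (\<Sum>M\<in>weighted_msets (insert b I) d k. \<Prod>i\<in>insert b I. fps_nth (F i) (count M i))"
    using sum.reindex_bij_betw[OF bij_betw_weighted_msets_insert[OF insert.hyps],
        of "\<lambda>M. \<Prod>i\<in>insert b I. fps_nth (F i) (count M i)"]
    by (simp add: \<Sigma>_def J_def case_prod_unfold)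
  finally show ?case .
qed

lemma sum_mset_image_eq_sum_count:
  fixes f :: "'a \<Rightarrow> 'b::comm_semiring_1"
  assumes "finite B" "set_mset M \<subseteq> B"
  shows "(\<Sum>x\<in>#M. f x) = (\<Sum>x\<in>B. f x * of_nat (count M x))"
  using assms(2)
proof (induction M)
  case (add a M)
  have "(\<Sum>x\<in>B. f x * of_nat (count (add_mset a M) x))
      = (\<Sum>x\<in>B. f x * of_nat (count M x) + (if x = a then f a else 0))"
    by (rule sum.cong) (auto simp: algebra_simps)
  also have "\<dots> = (\<Sum>x\<in>B. f x * of_nat (count M x)) + f a"
    using add.prems assms(1) by (simp add: sum.distrib)
  finally show ?case
    using add by (simp add: add.commute)
qed simp

lemma partsA_eq_weighted_msets:
  assumes "k \<le> n"
  shows "partsA A k = weighted_msets (A \<inter> {..n}) (\<lambda>a. a) k"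
proof (intro equalityI subsetI)
  fix M assume "M \<in> partsA A k"
  then have M: "set_mset M \<subseteq> A" "sum_mset M = k" by (auto simp: partsA_def)
  have "set_mset M \<subseteq> {..n}"
  proof
    fix x assume "x \<in># M"
    then have "x \<le> sum_mset M" by (simp add: sum_mset.remove)
    then show "x \<in> {..n}" using M(2) assms by simp
  qed
  with M show "M \<in> weighted_msets (A \<inter> {..n}) (\<lambda>a. a) k"
    using sum_mset_image_eq_sum_count[of "A \<inter> {..n}" M "\<lambda>x. x"] by (simp add: weighted_msets_def)
next
  fix M assume "M \<in> weighted_msets (A \<inter> {..n}) (\<lambda>a. a) k"
  then show "M \<in> partsA A k"
    using sum_mset_image_eq_sum_count[of "A \<inter> {..n}" M "\<lambda>x. x"] by (auto simp: weighted_msets_def partsA_def)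
qed

lemma finite_partsA:
  assumes "0 \<notin> A" shows "finite (partsA A k)"
  unfolding partsA_eq_weighted_msets[OF order.refl]
  by (rule finite_weighted_msets) (use assms in \<open>auto intro: gr0I\<close>)

lemma fps_nth_prod_dilate_partsA:
  fixes F :: "'a::idom fps"
  assumes "0 \<notin> A" "k \<le> n"
  shows "fps_nth (\<Prod>a\<in>A \<inter> {..n}. fps_dilate a F) k = (\<Sum>M\<in>partsA A k. \<Prod>a\<in>A \<inter> {..n}. fps_nth F (count M a))"
  unfolding partsA_eq_weighted_msets[OF assms(2)]
  by (rule fps_nth_prod_dilate) (use assms(1) in \<open>auto intro: gr0I\<close>)

lemma set_mset_partsA:
  assumes "M \<in> partsA A k" "k \<le> n"
  shows "set_mset M \<subseteq> A \<inter> {..n}"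
  using assms partsA_eq_weighted_msets[OF assms(2)] by (simp add: weighted_msets_def)

lemma partsA_0:
  assumes "0 \<notin> A" shows "partsA A 0 = {{#}}"
proof -
  have "M = {#}" if "set_mset M \<subseteq> A" "sum_mset M = 0" for M
    using that assms by (metis sum_mset_0_iff subsetD set_mset_eq_empty_iff all_not_in_conv)
  then show ?thesis by (auto simp: partsA_def)
qed

lemma pbarA_0: "0 \<notin> A \<Longrightarrow> pbarA A 0 = 1"
  by (simp add: pbarA_def EA_def OA_def partsA_0 Collect_conv_if)

definition fps_ones :: "'a::comm_ring_1 fps" where
  "fps_ones = Abs_fps (\<lambda>_. 1)"

definition fps_ones_upto :: "nat \<Rightarrow> 'a::comm_ring_1 fps" where
  "fps_ones_upto \<alpha> = Abs_fps (\<lambda>j. of_bool (j \<le> \<alpha>))"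

definition fps_alternating :: "'a::comm_ring_1 fps" where
  "fps_alternating = Abs_fps (\<lambda>j. (- 1) ^ j)"

lemma prod_of_bool: "finite S \<Longrightarrow> (\<Prod>x\<in>S. of_bool (P x)) = (of_bool (\<forall>x\<in>S. P x) :: 'a::comm_semiring_1)"
  by (induction S rule: finite_induct) auto

lemma fps_nth_prod_dilate_ones:
  assumes "0 \<notin> A" "k \<le> n"
  shows "fps_nth (\<Prod>a\<in>A \<inter> {..n}. fps_dilate a fps_ones) k = int (pA A k)"
  using assms by (simp add: fps_nth_prod_dilate_partsA fps_ones_def pA_def)

lemma fps_nth_prod_dilate_ones_upto:
  assumes "0 \<notin> A" "k \<le> n"
  shows "fps_nth (\<Prod>a\<in>A \<inter> {..n}. fps_dilate a (fps_ones_upto \<alpha>)) k = int (pA_alpha A \<alpha> k)"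
proof -
  have "(\<forall>a\<in>A \<inter> {..n}. count M a \<le> \<alpha>) \<longleftrightarrow> (\<forall>x. count M x \<le> \<alpha>)" if "M \<in> partsA A k" for M
  proof (intro iffI allI)
    fix x assume "\<forall>a\<in>A \<inter> {..n}. count M a \<le> \<alpha>"
    then show "count M x \<le> \<alpha>"
      using set_mset_partsA[OF that assms(2)] by (cases "x \<in># M") (auto simp: not_in_iff)
  qed simp
  then have "fps_nth (\<Prod>a\<in>A \<inter> {..n}. fps_dilate a (fps_ones_upto \<alpha>)) k
      = (\<Sum>M\<in>partsA A k. of_bool (\<forall>x. count M x \<le> \<alpha>))"
    using assms by (simp add: fps_nth_prod_dilate_partsA fps_ones_upto_def prod_of_bool)
  also have "\<dots> = int (card (partsA A k \<inter> {M. \<forall>x. count M x \<le> \<alpha>}))"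
    using finite_partsA[OF assms(1)] by simp
  finally show ?thesis
    by (simp add: pA_alpha_def Int_def)
qed

lemma fps_nth_prod_dilate_alternating:
  assumes "0 \<notin> A" "k \<le> n"
  shows "fps_nth (\<Prod>a\<in>A \<inter> {..n}. fps_dilate a fps_alternating) k = pbarA A k"
proof -
  have sign: "(\<Prod>a\<in>A \<inter> {..n}. (- 1) ^ count M a) = (of_bool (even (size M)) - of_bool (odd (size M)) :: int)"
    if "M \<in> partsA A k" for M
  proof -
    have "size M = (\<Sum>a\<in>A \<inter> {..n}. count M a)"
      using sum_mset_image_eq_sum_count[OF _ set_mset_partsA[OF that assms(2)], of "\<lambda>_. 1::nat"] by simp
    then show ?thesis
      by (simp add: power_sum[symmetric])
  qed
  have "fps_nth (\<Prod>a\<in>A \<inter> {..n}. fps_dilate a fps_alternating) k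
      = (\<Sum>M\<in>partsA A k. \<Prod>a\<in>A \<inter> {..n}. (- 1) ^ count M a :: int)"
    using assms by (simp add: fps_nth_prod_dilate_partsA fps_alternating_def)
  also have "\<dots> = (\<Sum>M\<in>partsA A k. of_bool (even (size M)) - of_bool (odd (size M)))"
    by (rule sum.cong[OF refl]) (rule sign)
  also have "\<dots> = int (card (partsA A k \<inter> {M. even (size M)})) - int (card (partsA A k \<inter> {M. odd (size M)}))"
    using finite_partsA[OF assms(1)] by (simp add: sum_subtractf)
  finally show ?thesis
    by (simp add: pbarA_def EA_def OA_def Int_def)
qed

lemma fps_ones_upto_eq: "fps_ones_upto \<alpha> = fps_ones * (1 - fps_X ^ (\<alpha> + 1))"
proof (rule fps_ext)
  fix j
  have "fps_nth (fps_ones * (1 - fps_X ^ (\<alpha> + 1))) j = fps_nth fps_ones j - fps_nth (fps_ones * fps_X ^ (\<alpha> + 1)) j"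
    by (simp only: right_diff_distrib mult_1_right fps_sub_nth)
  also have "\<dots> = of_bool (j \<le> \<alpha>)"
    by (simp only: fps_X_power_mult_right_nth) (simp add: fps_ones_def)
  finally show "fps_nth (fps_ones_upto \<alpha>) j = fps_nth (fps_ones * (1 - fps_X ^ (\<alpha> + 1))) j"
    by (metis fps_nth_Abs_fps fps_ones_upto_def)
qed

lemma fps_alternating_mult_one_plus_X: "fps_alternating * (1 + fps_X) = 1"
proof (rule fps_ext)
  fix n
  show "fps_nth (fps_alternating * (1 + fps_X)) n = fps_nth 1 n"
    using fps_X_power_mult_right_nth[of fps_alternating 1 n]
    by (cases n) (simp_all add: distrib_left fps_alternating_def)
qed

lemma fps_dilate_alternating_mult:
  assumes "d > 0"
  shows "fps_dilate d fps_alternating * (1 + fps_X ^ d) = (1 :: 'a::idom fps)"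
proof -
  have "fps_dilate d (fps_alternating * (1 + fps_X ^ 1)) = (1 :: 'a fps)"
    by (simp only: power_one_right fps_alternating_mult_one_plus_X fps_dilate_1)
  then show ?thesis
    by (simp only: fps_dilate_mult[OF assms] fps_dilate_add fps_dilate_1 fps_dilate_X_power[OF assms] mult_1_right)
qed

lemma one_minus_X_power_eq:
  assumes "d > 0"
  shows "1 - fps_X ^ d = fps_dilate d fps_alternating * (1 - fps_X ^ (2 * d) :: 'a::idom fps)"
proof -
  have "(1 - fps_X ^ (2 * d) :: 'a fps) = (1 + fps_X ^ d) * (1 - fps_X ^ d)"
    by (simp add: algebra_simps power_mult power2_eq_square mult_2)
  then have "fps_dilate d fps_alternating * (1 - fps_X ^ (2 * d)) =
      (fps_dilate d fps_alternating * (1 + fps_X ^ d)) * (1 - fps_X ^ d :: 'a fps)"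
    by (simp only: mult.assoc)
  then show ?thesis
    by (simp only: fps_dilate_alternating_mult[OF assms] mult_1_left)
qed

lemma one_minus_X_power_telescope:
  assumes "D > 0"
  shows "1 - fps_X ^ D =
    (\<Prod>i\<le>K. fps_dilate (D * 2 ^ i) fps_alternating) * (1 - fps_X ^ (D * 2 ^ Suc K) :: 'a::idom fps)"
proof (induction K)
  case 0
  then show ?case using one_minus_X_power_eq[OF assms] by (simp add: mult.commute)
next
  case (Suc K)
  have "1 - fps_X ^ (D * 2 ^ Suc K) =
      fps_dilate (D * 2 ^ Suc K) fps_alternating * (1 - fps_X ^ (D * 2 ^ Suc (Suc K)) :: 'a fps)"
    using one_minus_X_power_eq[of "D * 2 ^ Suc K"] assms by (simp add: mult.left_commute)
  with Suc.IH show ?case by (simp add: mult.assoc)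
qed

lemma fps_nth_mult_prod_one_minus_X_power:
  assumes "finite S" "\<forall>a\<in>S. k < m a"
  shows "fps_nth (F * (\<Prod>a\<in>S. 1 - fps_X ^ m a)) k = fps_nth (F :: 'a::comm_ring_1 fps) k"
  using assms
proof (induction S arbitrary: F rule: finite_induct)
  case (insert b S)
  then have "fps_nth (F * (1 - fps_X ^ m b) * (\<Prod>a\<in>S. 1 - fps_X ^ m a)) k = fps_nth (F * (1 - fps_X ^ m b)) k"
    by blast
  also have "\<dots> = fps_nth F k"
    using insert.prems by (simp add: right_diff_distrib fps_X_power_mult_right_nth)
  finally show ?case
    using insert.hyps by (simp add: mult.assoc)
qed simp

lemma prod_dilate_ones_upto_eq:
  fixes B :: "nat set" and \<alpha> K :: nat
  assumes "finite B" "\<forall>a\<in>B. a > 0"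
  defines "e \<equiv> \<alpha> + 1"
  shows "(\<Prod>a\<in>B. fps_dilate a (fps_ones_upto \<alpha>)) =
    (\<Prod>a\<in>B. fps_dilate a fps_ones) * (\<Prod>i\<le>K. fps_dilate (e * 2 ^ i) (\<Prod>a\<in>B. fps_dilate a fps_alternating)) *
    (\<Prod>a\<in>B. 1 - fps_X ^ (a * e * 2 ^ Suc K) :: 'a::idom fps)"
proof -
  have "fps_dilate a (fps_ones_upto \<alpha>) = fps_dilate a fps_ones *
      ((\<Prod>i\<le>K. fps_dilate (e * 2 ^ i) (fps_dilate a fps_alternating)) * (1 - fps_X ^ (a * e * 2 ^ Suc K) :: 'a fps))"
    if "a \<in> B" for a
  proof -
    have a: "a > 0" using that assms(2) by blast
    have "fps_dilate a (fps_ones_upto \<alpha>) = fps_dilate a fps_ones * (1 - fps_X ^ (a * e) :: 'a fps)"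
      unfolding e_def
      by (simp only: fps_ones_upto_eq fps_dilate_mult[OF a] fps_dilate_diff fps_dilate_1 fps_dilate_X_power[OF a])
    also have "1 - fps_X ^ (a * e) = (\<Prod>i\<le>K. fps_dilate (a * e * 2 ^ i) fps_alternating) *
        (1 - fps_X ^ (a * e * 2 ^ Suc K) :: 'a fps)"
      by (rule one_minus_X_power_telescope) (use a in \<open>simp add: e_def\<close>)
    also have "(\<Prod>i\<le>K. fps_dilate (a * e * 2 ^ i) fps_alternating) =
        (\<Prod>i\<le>K. fps_dilate (e * 2 ^ i) (fps_dilate a fps_alternating) :: 'a fps)"
      using a by (simp add: fps_dilate_dilate e_def algebra_simps)
    finally show ?thesis .
  qed
  then have "(\<Prod>a\<in>B. fps_dilate a (fps_ones_upto \<alpha>)) =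
      (\<Prod>a\<in>B. fps_dilate a fps_ones) * ((\<Prod>i\<le>K. \<Prod>a\<in>B. fps_dilate (e * 2 ^ i) (fps_dilate a fps_alternating)) *
      (\<Prod>a\<in>B. 1 - fps_X ^ (a * e * 2 ^ Suc K) :: 'a fps))"
    by (simp add: prod.distrib prod.swap[of _ B])
  then show ?thesis
    by (simp add: fps_dilate_prod e_def mult.assoc)
qed

lemma fps_nth_prod_dilate_ones_upto_eq:
  fixes B :: "nat set"
  assumes "finite B" "\<forall>a\<in>B. a > 0"
  shows "fps_nth (\<Prod>a\<in>B. fps_dilate a (fps_ones_upto \<alpha>)) n =
    fps_nth ((\<Prod>a\<in>B. fps_dilate a fps_ones) *
      (\<Prod>i\<le>n. fps_dilate ((\<alpha> + 1) * 2 ^ i) (\<Prod>a\<in>B. fps_dilate a fps_alternating)) :: 'a::idom fps) n"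
proof -
  have "n < a * (\<alpha> + 1) * 2 ^ Suc n" if "a \<in> B" for a
  proof -
    have "n < 1 * 2 ^ Suc n" using less_exp[of "Suc n"] by simp
    also have "\<dots> \<le> a * (\<alpha> + 1) * 2 ^ Suc n"
      by (rule mult_le_mono1) (use assms(2) that in \<open>simp add: Suc_le_eq\<close>)
    finally show ?thesis .
  qed
  then show ?thesis
    unfolding prod_dilate_ones_upto_eq[OF assms, of \<alpha> n]
    by (intro fps_nth_mult_prod_one_minus_X_power[OF assms(1)]) blast
qed

lemma weighted_msets_0:
  assumes "finite I" "\<forall>i\<in>I. d i > 0"
  shows "weighted_msets I d 0 = {{#}}"
proof (intro equalityI subsetI)
  fix M assume "M \<in> weighted_msets I d 0"
  then have zero: "\<forall>i\<in>I. d i * count M i = 0" and sub: "set_mset M \<subseteq> I"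
    using assms(1) by (auto simp: weighted_msets_def)
  have "count M i = 0" for i
  proof (cases "i \<in> I")
    case True
    then show ?thesis using zero[rule_format, OF True] assms(2)[rule_format, OF True] by simp
  next
    case False
    then show ?thesis using sub by (auto simp: count_eq_zero_iff)
  qed
  then show "M \<in> {{#}}" by (simp add: multiset_eq_iff)
qed (simp add: weighted_msets_def)

lemma sum_pow2_weighted_eq:
  fixes M :: "nat multiset"
  assumes "set_mset M \<subseteq> {..n}"
  shows "(\<Sum>i\<le>n. (\<alpha> + 1) * 2 ^ i * count M i) = (\<alpha> + 1) * (\<Sum>i\<in>set_mset M. 2 ^ i * count M i)"
proof -
  have "(\<Sum>i\<in>set_mset M. 2 ^ i * count M i) = (\<Sum>i\<le>n. 2 ^ i * count M i)"
    by (rule sum.mono_neutral_left) (use assms in \<open>auto simp: not_in_iff\<close>)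
  then show ?thesis
    by (simp only: sum_distrib_left mult.assoc)
qed

lemma Gamma_index_eq:
  assumes "m \<le> n"
  shows "{N. finite {i. N i \<noteq> 0} \<and> m = (\<alpha> + 1) * (\<Sum>i\<in>{i. N i \<noteq> 0}. 2 ^ i * N i)} =
    count ` weighted_msets {..n} (\<lambda>i. (\<alpha> + 1) * 2 ^ i) m"
proof (intro equalityI subsetI)
  fix N assume "N \<in> {N. finite {i. N i \<noteq> 0} \<and> m = (\<alpha> + 1) * (\<Sum>i\<in>{i. N i \<noteq> 0}. 2 ^ i * N i)}"
  then have fin: "finite {i. N i \<noteq> 0}" and m: "m = (\<alpha> + 1) * (\<Sum>i\<in>{i. N i \<noteq> 0}. 2 ^ i * N i)"
    by auto
  define M where "M = Abs_multiset N"
  have N: "N = count M"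
    using fin by (simp add: M_def count_Abs_multiset)
  have m': "m = (\<alpha> + 1) * (\<Sum>i\<in>set_mset M. 2 ^ i * count M i)"
    using m unfolding N by (simp add: count_eq_zero_iff)
  have "set_mset M \<subseteq> {..n}"
  proof
    fix i assume i: "i \<in># M"
    have "i < 2 ^ i" by (rule less_exp)
    also have "\<dots> \<le> 2 ^ i * count M i" using i by simp
    also have "\<dots> \<le> (\<Sum>j\<in>set_mset M. 2 ^ j * count M j)"
      by (rule member_le_sum) (use i in auto)
    also have "\<dots> \<le> m" unfolding m' by simp
    finally show "i \<in> {..n}" using assms by simp
  qed
  then have "M \<in> weighted_msets {..n} (\<lambda>i. (\<alpha> + 1) * 2 ^ i) m"
    using m' sum_pow2_weighted_eq by (simp add: weighted_msets_def)
  then show "N \<in> count ` weighted_msets {..n} (\<lambda>i. (\<alpha> + 1) * 2 ^ i) m"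
    unfolding N by blast
next
  fix N assume "N \<in> count ` weighted_msets {..n} (\<lambda>i. (\<alpha> + 1) * 2 ^ i) m"
  then obtain M where N: "N = count M" and M: "M \<in> weighted_msets {..n} (\<lambda>i. (\<alpha> + 1) * 2 ^ i) m"
    by blast
  then show "N \<in> {N. finite {i. N i \<noteq> 0} \<and> m = (\<alpha> + 1) * (\<Sum>i\<in>{i. N i \<noteq> 0}. 2 ^ i * N i)}"
    using sum_pow2_weighted_eq[of M n \<alpha>] by (simp add: weighted_msets_def count_eq_zero_iff)
qed

lemma Gamma_eq_sum_weighted_msets:
  assumes "0 \<notin> A" "m \<le> n"
  shows "Gamma A \<alpha> m = (\<Sum>M\<in>weighted_msets {..n} (\<lambda>i. (\<alpha> + 1) * 2 ^ i) m. \<Prod>i\<le>n. pbarA A (count M i))"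
proof (cases "m = 0")
  case True
  then show ?thesis
    using assms(1) by (simp add: Gamma_def weighted_msets_0 pbarA_0)
next
  case False
  let ?W = "weighted_msets {..n} (\<lambda>i. (\<alpha> + 1) * 2 ^ i) m"
  have "Gamma A \<alpha> m = (\<Sum>N\<in>count ` ?W. \<Prod>j\<in>{j. N j \<noteq> 0}. pbarA A (N j))"
    unfolding Gamma_def Gamma_index_eq[OF assms(2)] using False by (simp only: if_False)
  also have "\<dots> = (\<Sum>M\<in>?W. \<Prod>j\<in>set_mset M. pbarA A (count M j))"
    by (subst sum.reindex) (auto simp: inj_on_def count_inject count_eq_zero_iff)
  also have "\<dots> = (\<Sum>M\<in>?W. \<Prod>i\<le>n. pbarA A (count M i))"
    by (intro sum.cong refl prod.mono_neutral_left)
       (use assms(1) in \<open>auto simp: weighted_msets_def pbarA_0 not_in_iff\<close>)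
  finally show ?thesis .
qed

lemma fps_nth_Gamma:
  assumes "0 \<notin> A" "m \<le> n"
  shows "fps_nth (\<Prod>i\<le>n. fps_dilate ((\<alpha> + 1) * 2 ^ i) (\<Prod>a\<in>A \<inter> {..n}. fps_dilate a fps_alternating)) m =
    Gamma A \<alpha> m"
proof -
  let ?W = "weighted_msets {..n} (\<lambda>i. (\<alpha> + 1) * 2 ^ i) m"
  have bound: "count M i \<le> n" if "M \<in> ?W" "i \<le> n" for M i
  proof -
    have "1 * count M i \<le> (\<alpha> + 1) * 2 ^ i * count M i"
      by (rule mult_le_mono1) (simp add: Suc_le_eq)
    also have "\<dots> \<le> (\<Sum>j\<le>n. (\<alpha> + 1) * 2 ^ j * count M j)"
      by (rule member_le_sum) (use that in auto)
    finally show ?thesis using that assms(2) by (simp add: weighted_msets_def)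
  qed
  have "fps_nth (\<Prod>i\<le>n. fps_dilate ((\<alpha> + 1) * 2 ^ i) (\<Prod>a\<in>A \<inter> {..n}. fps_dilate a fps_alternating)) m =
      (\<Sum>M\<in>?W. \<Prod>i\<le>n. fps_nth (\<Prod>a\<in>A \<inter> {..n}. fps_dilate a fps_alternating) (count M i))"
    by (rule fps_nth_prod_dilate) auto
  also have "\<dots> = (\<Sum>M\<in>?W. \<Prod>i\<le>n. pbarA A (count M i))"
    by (intro sum.cong prod.cong refl) (simp add: fps_nth_prod_dilate_alternating[OF assms(1) bound])
  also have "\<dots> = Gamma A \<alpha> m"
    by (rule Gamma_eq_sum_weighted_msets[OF assms, symmetric])
  finally show ?thesis .
qed

theorem mainTheorem3:
  fixes \<psi> :: "nat \<Rightarrow> nat" and A :: "nat set" and \<alpha> :: nat and n :: nat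
  assumes "\<forall>k\<ge>1. \<psi> k \<ge> 1"
    and "inj_on \<psi> {1..}"
    and "A = \<psi> ` {1..}"
    and "\<alpha> \<ge> 1"
  shows "int (pA_alpha A \<alpha> n) = (\<Sum>i = 0..n. int (pA A (n - i)) * Gamma A \<alpha> i)"
proof -
  have A0: "0 \<notin> A" using assms(1,3) by force
  define B where "B = A \<inter> {..n}"
  have B: "finite B" "\<forall>a\<in>B. a > 0" using A0 by (auto simp: B_def intro: gr0I)
  define P :: "int fps" where "P = (\<Prod>a\<in>B. fps_dilate a fps_ones)"
  define Q :: "int fps" where "Q = (\<Prod>i\<le>n. fps_dilate ((\<alpha> + 1) * 2 ^ i) (\<Prod>a\<in>B. fps_dilate a fps_alternating))"
  have "int (pA_alpha A \<alpha> n) = fps_nth (\<Prod>a\<in>B. fps_dilate a (fps_ones_upto \<alpha>)) n"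
    unfolding B_def by (rule fps_nth_prod_dilate_ones_upto[OF A0 order.refl, symmetric])
  also have "\<dots> = fps_nth (P * Q) n"
    unfolding P_def Q_def by (rule fps_nth_prod_dilate_ones_upto_eq[OF B])
  also have "\<dots> = (\<Sum>i = 0..n. fps_nth Q i * fps_nth P (n - i))"
    by (simp only: mult.commute[of P] fps_mult_nth)
  also have "\<dots> = (\<Sum>i = 0..n. int (pA A (n - i)) * Gamma A \<alpha> i)"
    using fps_nth_Gamma[OF A0, of _ n \<alpha>] fps_nth_prod_dilate_ones[OF A0, of _ n]
    by (intro sum.cong refl) (simp add: P_def Q_def B_def)
  finally show ?thesis .
qed

end
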